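(* Consider the normal linear model $y=\alpha\mathbf 1+X\beta+\epsilon$, $\epsilon\sim N(0,\sigma^2I_n)$, with a hyper-$g$ prior with hyperparameter $a>2$, where $X=(X_1,X_2)$ is an $n\times p$ centered design of full column rank, and consider the sequence of problems $\Psi_N$ with data $y_N=\alpha\mathbf 1+X_1\beta_{1(N)}+X_2\beta_2+\epsilon$, where $X_1,X_2,\alpha,\beta_2,\epsilon$ are fixed and $\|\beta_{1(N)}\|\to\infty$. If $n>a+p-1$, then the posterior distribution of $\sigma^2$ converges, as $N\to\infty$, to the inverse gamma distribution with density proportional to $$(\sigma^2)^{-\left(\frac{n+1-a-p}{2}+1\right)}\exp\!\Big[-\frac{(n-p-1)\widehat\sigma^2}{2\sigma^2}\Big],\qquad \sigma^2>0,$$ i.e. an $IG\big(\frac{n+1-a-p}{2},\frac{2}{(n-p-1)\widehat\sigma^2}\big)$ distribution, where $\widehat\sigma^2=\|y-\widehat\alpha_{LS}\mathbf 1-X\widehat\beta_{LS}\|^2/(n-p-1)$ (which does not depend on $N$).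
   Context: Hyper-$g$ prior: $\pi(\alpha,\sigma^2)\propto1/\sigma^2$; $\beta\mid g,\sigma^2\sim N(0,g\sigma^2(X^TX)^{-1})$; $g$ has density $\frac{a-2}{2}(1+g)^{-a/2}$, $g>0$. $\widehat\alpha_{LS},\widehat\beta_{LS}$ are the least squares estimates. The response is centered. *)

theory Defs
  imports "HOL-Probability.Probability"
begin

text \<open>Observations are indexed by the finite type 'n (n = CARD('n)), predictors by
  the finite type 'p (p = CARD('p)). The design X is an n x p real matrix.\<close>

definition centered_design :: "real^'p^'n \<Rightarrow> bool" where
  "centered_design X \<longleftrightarrow> (\<forall>j. (\<Sum>i\<in>UNIV. X $ i $ j) = 0)"

definition mvn_density :: "real^'p \<Rightarrow> real^'p^'p \<Rightarrow> real^'p \<Rightarrow> real" where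
  "mvn_density \<mu> \<Sigma> x =
     (2 * pi) powr (- real CARD('p) / 2) / sqrt (det \<Sigma>) *
     exp (- (1/2) * ((x - \<mu>) \<bullet> (matrix_inv \<Sigma> *v (x - \<mu>))))"

text \<open>Normal likelihood of y = alpha 1 + X beta + eps, eps ~ N(0, s I_n), s = sigma^2.\<close>
definition likelihood :: "real^'p^'n \<Rightarrow> real^'n \<Rightarrow> real \<Rightarrow> real^'p \<Rightarrow> real \<Rightarrow> real" where
  "likelihood X y \<alpha> \<beta> s =
     (2 * pi * s) powr (- real CARD('n) / 2) *
     exp (- (norm (y - vec \<alpha> - X *v \<beta>))\<^sup>2 / (2 * s))"

definition hyper_g_density :: "real \<Rightarrow> real \<Rightarrow> real" where
  "hyper_g_density a g = (a - 2) / 2 * (1 + g) powr (- a / 2)"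

text \<open>Unnormalised joint posterior density of (alpha, beta, g, s), s = sigma^2 > 0, g > 0:
  likelihood * pi(alpha, s) * pi(beta | g, s) * pi(g), with pi(alpha, s) = 1/s and
  beta | g, s ~ N(0, g s (X^T X)^{-1}).\<close>
definition joint_post :: "real^'p^'n \<Rightarrow> real \<Rightarrow> real^'n \<Rightarrow> real \<Rightarrow> real^'p \<Rightarrow> real \<Rightarrow> real \<Rightarrow> ennreal" where
  "joint_post X a y \<alpha> \<beta> g s =
     ennreal (likelihood X y \<alpha> \<beta> s * (1 / s) *
              mvn_density 0 ((g * s) *\<^sub>R matrix_inv (transpose X ** X)) \<beta> *
              hyper_g_density a g)"

definition sigma2_post_unnorm :: "real^'p^'n \<Rightarrow> real \<Rightarrow> real^'n \<Rightarrow> real \<Rightarrow> ennreal" where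
  "sigma2_post_unnorm X a y s =
     (if s > 0 then
        (\<integral>\<^sup>+ \<alpha>. (\<integral>\<^sup>+ \<beta>. (\<integral>\<^sup>+ g. indicator {0<..} g * joint_post X a y \<alpha> \<beta> g s \<partial>lborel) \<partial>lborel) \<partial>lborel)
      else 0)"

definition sigma2_posterior :: "real^'p^'n \<Rightarrow> real \<Rightarrow> real^'n \<Rightarrow> real measure" where
  "sigma2_posterior X a y =
     density lborel (\<lambda>s. sigma2_post_unnorm X a y s /
                          (\<integral>\<^sup>+ t. sigma2_post_unnorm X a y t \<partial>lborel))"

definition is_LS :: "real^'p^'n \<Rightarrow> real^'n \<Rightarrow> real \<times> (real^'p) \<Rightarrow> bool" where
  "is_LS X y ab \<longleftrightarrow>
     (\<forall>\<alpha> \<beta>. (norm (y - vec (fst ab) - X *v snd ab))\<^sup>2 \<le> (norm (y - vec \<alpha> - X *v \<beta>))\<^sup>2)"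

definition LS_estimate :: "real^'p^'n \<Rightarrow> real^'n \<Rightarrow> real \<times> (real^'p)" where
  "LS_estimate X y = (SOME ab. is_LS X y ab)"

definition sigma_hat2 :: "real^'p^'n \<Rightarrow> real^'n \<Rightarrow> real" where
  "sigma_hat2 X y =
     (let (\<alpha>, \<beta>) = LS_estimate X y in
        (norm (y - vec \<alpha> - X *v \<beta>))\<^sup>2 / (real CARD('n) - real CARD('p) - 1))"

text \<open>Inverse gamma distribution IG(k, theta) (scale parametrisation as in the paper):
  density (1/theta)^k / Gamma k * s^(-(k+1)) * exp(-1/(theta s)) for s > 0.\<close>
definition inv_gamma_density :: "real \<Rightarrow> real \<Rightarrow> real \<Rightarrow> real" where
  "inv_gamma_density k \<theta> s =
     (if s > 0 then (1/\<theta>) powr k / Gamma k * s powr (-(k + 1)) * exp (- 1 / (\<theta> * s)) else 0)"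

definition inv_gamma_measure :: "real \<Rightarrow> real \<Rightarrow> real measure" where
  "inv_gamma_measure k \<theta> = density lborel (\<lambda>s. ennreal (inv_gamma_density k \<theta> s))"

end

theory Submission
  imports Defs
begin

(* Decompose eps = c 1 + X b + r with r orthogonal to 1 and to the columns of X.  Then
   y_N = (alpha + c) 1 + X (beta_N + b) + r, so the least squares residual of every y_N is r
   and sigma_hat^2 = |r|^2 / (n - p - 1).

   In the joint posterior, alpha enters through a Gaussian factor and beta through a Gaussian
   factor after completing the square; integrating both out leaves, up to a constant,
   s^(-(n+1)/2) exp(-|r|^2 / (2 s)) times the integral over g > 0 of
   (1 + g)^(-(a+p)/2) exp(-Q / (2 s (1 + g))), where Q = |X (beta_N + b)|^2 -> infinity.
   The substitution 1 + g = Q t turns this into Q^(1-(a+p)/2) times the integral of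
   t^(-(a+p)/2) exp(-1 / (2 s t)) over t > 1/Q.  As 1/Q -> 0, dominated convergence shows that
   the normalised densities converge on every Borel set, in particular the distribution
   functions converge, to the density proportional to
   s^(-(n+1)/2) (2 s)^((a+p)/2 - 1) exp(-|r|^2 / (2 s)), which is the inverse gamma density
   IG((n + 1 - a - p)/2, 2/|r|^2). *)

section \<open>Gaussian and inverse gamma integrals\<close>

lemma nn_integral_gaussian_kernel:
  fixes v m :: real
  assumes v: "v > 0"
  shows "(\<integral>\<^sup>+x. ennreal (exp (-(x - m)\<^sup>2 / (2 * v))) \<partial>lborel) = ennreal (sqrt (2 * pi * v))"
proof -
  have "ennreal (exp (-(x - m)\<^sup>2 / (2 * v)))
      = ennreal (sqrt (2 * pi * v)) * ennreal (normal_density m (sqrt v) x)" for x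
    using v by (simp add: normal_density_def ennreal_mult[symmetric] real_sqrt_mult)
  moreover have "(\<integral>\<^sup>+x. ennreal (normal_density m (sqrt v) x) \<partial>lborel) = 1"
    using v by (subst nn_integral_eq_integral)
      (auto intro!: integrable_normal_density integral_normal_density)
  ultimately show ?thesis
    by (simp add: nn_integral_cmult)
qed

lemma Gamma_has_integral_greaterThan:
  assumes "x > (0 :: real)"
  shows "((\<lambda>t. t powr (x - 1) / exp t) has_integral Gamma x) {0<..}"
proof -
  have "((\<lambda>t. if t \<in> {0<..} then t powr (x - 1) / exp t else 0) has_integral Gamma x) {0..}"
    by (rule has_integral_spike [OF _ _ Gamma_integral_real[OF assms], of "{0}"]) auto
  then show ?thesis
    by (subst (asm) has_integral_restrict) auto
qed

lemma has_integral_inverse_gamma_kernel: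
  fixes k b :: real
  assumes k: "k > 0" and b: "b > 0"
  shows "((\<lambda>s. s powr (-(k + 1)) * exp (- b / s)) has_integral (b powr (-k) * Gamma k)) {0<..}"
proof -
  define f where "f t = t powr (k - 1) / exp t" for t :: real
  have f_int: "(f has_integral Gamma k) {0<..}"
    unfolding f_def by (rule Gamma_has_integral_greaterThan[OF k])
  have f_abs: "f absolutely_integrable_on {0<..}"
    using f_int by (intro nonnegative_absolutely_integrable_1) (auto simp: f_def)
  have image: "(\<lambda>s. b / s) ` {0<..} = {0::real<..}"
  proof
    show "{0<..} \<subseteq> (\<lambda>s. b / s) ` {0<..}"
    proof
      fix t :: real assume "t \<in> {0<..}"
      then have "t = b / (b / t)" "b / t \<in> {0<..}" using b by auto
      then show "t \<in> (\<lambda>s. b / s) ` {0<..}" by blast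
    qed
  qed (use b in auto)
  have deriv: "((\<lambda>s. b / s) has_field_derivative (- b / s\<^sup>2)) (at s within {0<..})"
    if "s \<in> {0<..}" for s
    using that by (auto intro!: derivative_eq_intros simp: power2_eq_square field_simps)
  have inj: "inj_on (\<lambda>s. b / s) {0::real<..}"
    using b by (auto simp: inj_on_def field_simps)
  have "(\<lambda>s. \<bar>- b / s\<^sup>2\<bar> * f (b / s)) absolutely_integrable_on {0<..} \<and>
        integral {0<..} (\<lambda>s. \<bar>- b / s\<^sup>2\<bar> * f (b / s)) = Gamma k"
    using has_absolute_integral_change_of_variables_1'[OF _ deriv inj, of f "Gamma k"] f_abs f_int image
    by (simp add: has_integral_iff)
  then have "((\<lambda>s. \<bar>- b / s\<^sup>2\<bar> * f (b / s)) has_integral Gamma k) {0<..}"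
    by (metis absolutely_integrable_on_def has_integral_iff)
  moreover have "\<bar>- b / s\<^sup>2\<bar> * f (b / s) = b powr k * (s powr (-(k + 1)) * exp (- b / s))"
    if "s \<in> {0<..}" for s
  proof -
    have s: "s > 0" using that by simp
    have "(b / s) powr (k - 1) = b powr k / b * (s powr (- (k + 1)) * s\<^sup>2)"
      using s b by (simp add: powr_divide powr_diff powr_add powr_minus power2_eq_square field_simps)
    then show ?thesis
      using s b by (simp add: f_def exp_minus power2_eq_square field_simps)
  qed
  ultimately have "((\<lambda>s. b powr k * (s powr (-(k + 1)) * exp (- b / s))) has_integral Gamma k) {0<..}"
    by (rule has_integral_cong[THEN iffD1, rotated])
  then have "((\<lambda>s. b powr (-k) * (b powr k * (s powr (-(k + 1)) * exp (- b / s))))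
      has_integral (b powr (-k) * Gamma k)) {0<..}"
    by (rule has_integral_mult_right)
  moreover have "b powr (-k) * (b powr k * x) = x" for x
    using b by (simp add: powr_minus)
  ultimately show ?thesis
    by simp
qed

lemma nn_integral_inverse_gamma_kernel:
  fixes k b :: real
  assumes k: "k > 0" and b: "b > 0"
  shows "(\<integral>\<^sup>+s. ennreal (s powr (-(k + 1)) * exp (- b / s)) * indicator {0<..} s \<partial>lborel)
       = ennreal (b powr (-k) * Gamma k)"
  by (rule nn_integral_has_integral_lebesgue'[OF _ has_integral_inverse_gamma_kernel[OF k b]]) simp

lemma nn_integral_lborel_pos:
  fixes f :: "'a::euclidean_space \<Rightarrow> real"
  assumes [measurable]: "f \<in> borel_measurable borel" and pos: "\<And>x. f x > 0"
  shows "(\<integral>\<^sup>+x. ennreal (f x) \<partial>lborel) > 0"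
proof (rule ccontr)
  assume "\<not> ?thesis"
  then have "AE x in lborel. ennreal (f x) = 0"
    by (simp add: nn_integral_0_iff_AE not_gr_zero)
  then have "AE x in (lborel :: 'a measure). False"
    by (rule AE_mp) (use pos in \<open>simp add: less_le\<close>)
  then show False
    by (simp add: eventually_False ae_filter_eq_bot_iff)
qed

lemma borel_measurable_matrix_vector_mult [measurable]:
  fixes X :: "real^'p^'n"
  shows "(\<lambda>x. X *v x) \<in> borel_measurable borel"
  by (intro borel_measurable_continuous_onI matrix_vector_mult_linear_continuous_on)

definition design_gaussian_integral :: "real^'p^'n \<Rightarrow> ennreal" where
  "design_gaussian_integral X = (\<integral>\<^sup>+\<beta>. ennreal (exp (- (norm (X *v \<beta>))\<^sup>2)) \<partial>lborel)"

lemma design_gaussian_integral_finite: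
  fixes X :: "real^'p^'n"
  assumes inj: "inj ((*v) X)"
  shows "design_gaussian_integral X < \<infinity>"
proof -
  obtain B where B: "B > 0" "\<And>x. B * norm x \<le> norm (X *v x)"
    using linear_inj_bounded_below_pos[of "(*v) X"] inj by (metis matrix_vector_mul_linear)
  have dominated: "ennreal (exp (- (norm (X *v \<beta>))\<^sup>2))
      \<le> (\<Prod>b\<in>Basis. ennreal (exp (- (B\<^sup>2) * (\<beta> \<bullet> b)\<^sup>2)))" for \<beta> :: "real^'p"
  proof -
    have "(B * norm \<beta>)\<^sup>2 \<le> (norm (X *v \<beta>))\<^sup>2"
      using B by (intro power_mono) auto
    moreover have "(norm \<beta>)\<^sup>2 = (\<Sum>b\<in>Basis. (\<beta> \<bullet> b)\<^sup>2)"
      by (simp only: power2_norm_eq_inner euclidean_inner[of \<beta> \<beta>]) (simp add: power2_eq_square)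
    ultimately have "- (norm (X *v \<beta>))\<^sup>2 \<le> (\<Sum>b\<in>Basis. - (B\<^sup>2) * (\<beta> \<bullet> b)\<^sup>2)"
      by (simp add: power_mult_distrib sum_negf sum_distrib_left[symmetric])
    then have "exp (- (norm (X *v \<beta>))\<^sup>2) \<le> (\<Prod>b\<in>Basis. exp (- (B\<^sup>2) * (\<beta> \<bullet> b)\<^sup>2))"
      by (simp add: exp_sum[symmetric])
    then show ?thesis
      by (simp add: prod_ennreal ennreal_leI)
  qed
  have gauss_1d: "(\<integral>\<^sup>+x. ennreal (exp (- (B\<^sup>2) * x\<^sup>2)) \<partial>lborel) = ennreal (sqrt (pi / B\<^sup>2))"
    using nn_integral_gaussian_kernel[of "1 / (2 * B\<^sup>2)" 0] B(1) by (simp add: field_simps)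
  have "design_gaussian_integral X
      \<le> (\<integral>\<^sup>+\<beta>. (\<Prod>b\<in>Basis. ennreal (exp (- (B\<^sup>2) * (\<beta> \<bullet> b)\<^sup>2))) \<partial>(lborel :: (real^'p) measure))"
    unfolding design_gaussian_integral_def by (rule nn_integral_mono) (rule dominated)
  also have "\<dots> = (\<Prod>b\<in>(Basis :: (real^'p) set). (\<integral>\<^sup>+x. ennreal (exp (- (B\<^sup>2) * x\<^sup>2)) \<partial>lborel))"
    by (rule nn_integral_lborel_prod[where f = "\<lambda>b x. ennreal (exp (- (B\<^sup>2) * x\<^sup>2))"]) auto
  also have "\<dots> < \<infinity>"
    using gauss_1d by (simp add: power_less_top_ennreal)
  finally show ?thesis .
qed

lemma design_gaussian_integral_pos:
  fixes X :: "real^'p^'n"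
  shows "design_gaussian_integral X > 0"
  unfolding design_gaussian_integral_def by (rule nn_integral_lborel_pos) auto

lemma nn_integral_design_gaussian_affine:
  fixes X :: "real^'p^'n" and m :: "real^'p" and l :: real
  assumes l: "l > 0"
  shows "(\<integral>\<^sup>+\<beta>. ennreal (exp (- l * (norm (X *v (\<beta> - m)))\<^sup>2)) \<partial>lborel)
       = ennreal (l powr (- real CARD('p) / 2)) * design_gaussian_integral X"
proof -
  define c where "c = 1 / sqrt l"
  have c: "c > 0" using l by (simp add: c_def)
  have "(\<integral>\<^sup>+\<beta>. ennreal (exp (- l * (norm (X *v (\<beta> - m)))\<^sup>2)) \<partial>lborel)
      = ennreal (c ^ DIM(real^'p)) * (\<integral>\<^sup>+x. ennreal (exp (- l * (norm (X *v (c *\<^sub>R x)))\<^sup>2)) \<partial>lborel)"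
    using c by (subst lborel_affine[of c m])
      (simp_all add: nn_integral_density nn_integral_distr nn_integral_cmult)
  also have "(\<lambda>x. ennreal (exp (- l * (norm (X *v (c *\<^sub>R x)))\<^sup>2)))
      = (\<lambda>x. ennreal (exp (- (norm (X *v x))\<^sup>2)))"
    using l by (simp add: c_def matrix_vector_mult_scaleR power_mult_distrib power_divide)
  also have "c ^ DIM(real^'p) = l powr (- real CARD('p) / 2)"
    using l by (simp add: c_def powr_minus_divide powr_realpow[symmetric] powr_powr
      powr_half_sqrt[symmetric] divide_simps)
  finally show ?thesis
    unfolding design_gaussian_integral_def .
qed

section \<open>Least squares geometry\<close>

lemma decompose_intercept_design:
  fixes X :: "real^'p^'n" and y :: "real^'n"
  obtains c b r where "y = vec c + X *v b + r" "\<And>\<beta>. r \<bullet> (X *v \<beta>) = 0" "r \<bullet> vec 1 = 0"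
proof -
  define S where "S = insert (vec 1 :: real^'n) (range (\<lambda>b. X *v b))"
  obtain u z where u: "u \<in> span S" and z: "\<And>w. w \<in> span S \<Longrightarrow> orthogonal z w" and "y = u + z"
    using orthogonal_subspace_decomp_exists[of S y] by blast
  have "span (range (\<lambda>b. X *v b)) = range (\<lambda>b. X *v b)"
    using span_linear_image[OF matrix_vector_mul_linear, of X UNIV] by simp
  with u obtain k b where "u - k *\<^sub>R vec 1 = X *v b"
    unfolding S_def span_insert by auto
  then have "y = vec k + X *v b + z"
    using \<open>y = u + z\<close> by (simp add: algebra_simps vec_eq_iff)
  moreover have "X *v \<beta> \<in> span S" "vec 1 \<in> span S" for \<beta>
    by (auto intro: span_base simp: S_def)
  ultimately show ?thesis
    using z that by (simp add: orthogonal_def)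
qed

lemma centered_design_orthogonal_intercept:
  fixes X :: "real^'p^'n"
  assumes "centered_design X"
  shows "vec d \<bullet> (X *v \<beta>) = 0"
proof -
  have "vec d \<bullet> (X *v \<beta>) = d * (\<Sum>i\<in>UNIV. \<Sum>j\<in>UNIV. X $ i $ j * \<beta> $ j)"
    by (simp add: inner_vec_def matrix_vector_mult_def sum_distrib_left)
  also have "\<dots> = d * (\<Sum>j\<in>UNIV. (\<Sum>i\<in>UNIV. X $ i $ j) * \<beta> $ j)"
    by (subst sum.swap) (simp add: sum_distrib_right)
  finally show ?thesis
    using assms by (simp add: centered_design_def)
qed

lemma norm_vec_power2: "(norm (vec d :: real^'n))\<^sup>2 = real CARD('n) * d\<^sup>2"
  by (subst power2_norm_eq_inner) (simp add: inner_vec_def power2_eq_square)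

lemma residual_norm_pythagoras:
  fixes X :: "real^'p^'n"
  assumes cen: "centered_design X" and r_X: "\<And>\<beta>. r \<bullet> (X *v \<beta>) = 0" and r_1: "r \<bullet> vec 1 = 0"
  shows "(norm (vec c + X *v b + r - vec \<alpha> - X *v \<beta>))\<^sup>2
       = (norm r)\<^sup>2 + real CARD('n) * (c - \<alpha>)\<^sup>2 + (norm (X *v (b - \<beta>)))\<^sup>2"
proof -
  define v where "v = (vec (c - \<alpha>) :: real^'n)"
  define w where "w = X *v (b - \<beta>)"
  have "v = (c - \<alpha>) *\<^sub>R vec 1"
    by (simp add: v_def vec_eq_iff)
  then have orth: "orthogonal r (v + w)"
    using r_1 r_X[of "b - \<beta>"] by (simp add: orthogonal_def inner_add_right w_def)
  have split: "vec c + X *v b + r - vec \<alpha> - X *v \<beta> = (v + w) + r"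
    by (simp add: v_def w_def matrix_vector_mult_diff_distrib vec_eq_iff)
  have "(norm (vec c + X *v b + r - vec \<alpha> - X *v \<beta>))\<^sup>2 = (norm (v + w))\<^sup>2 + (norm r)\<^sup>2"
    unfolding split by (rule norm_add_Pythagorean) (simp add: orthogonal_commute orth)
  also have "(norm (v + w))\<^sup>2 = (norm v)\<^sup>2 + (norm w)\<^sup>2"
    unfolding v_def w_def
    by (rule norm_add_Pythagorean) (simp add: orthogonal_def centered_design_orthogonal_intercept[OF cen])
  finally show ?thesis
    by (simp add: v_def w_def norm_vec_power2)
qed

lemma sigma_hat2_residual:
  fixes X :: "real^'p^'n"
  assumes cen: "centered_design X" and y: "y = vec c + X *v b + r"
    and r_X: "\<And>\<beta>. r \<bullet> (X *v \<beta>) = 0" and r_1: "r \<bullet> vec 1 = 0"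
  shows "sigma_hat2 X y = (norm r)\<^sup>2 / (real CARD('n) - real CARD('p) - 1)"
proof -
  have rss: "(norm (y - vec \<alpha> - X *v \<beta>))\<^sup>2 = (norm r)\<^sup>2 + real CARD('n) * (c - \<alpha>)\<^sup>2 + (norm (X *v (b - \<beta>)))\<^sup>2"
    for \<alpha> \<beta>
    unfolding y by (rule residual_norm_pythagoras[OF cen r_X r_1])
  then have "is_LS X y (c, b)"
    unfolding is_LS_def by simp
  then have "is_LS X y (LS_estimate X y)"
    unfolding LS_estimate_def by (rule someI)
  moreover obtain \<alpha>' \<beta>' where LS: "LS_estimate X y = (\<alpha>', \<beta>')"
    by fastforce
  ultimately have "(norm (y - vec \<alpha>' - X *v \<beta>'))\<^sup>2 \<le> (norm (y - vec c - X *v b))\<^sup>2"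
    unfolding is_LS_def by auto
  also have "\<dots> = (norm r)\<^sup>2"
    by (simp add: rss)
  finally have "(norm (y - vec \<alpha>' - X *v \<beta>'))\<^sup>2 \<le> (norm r)\<^sup>2" .
  moreover have "(norm r)\<^sup>2 \<le> (norm (y - vec \<alpha>' - X *v \<beta>'))\<^sup>2"
    unfolding rss by simp
  ultimately show ?thesis
    unfolding sigma_hat2_def LS by simp
qed

section \<open>The Gram matrix and the prior of beta\<close>

lemma matrix_inv_eqI:
  fixes A B :: "real^'n^'n"
  assumes AB: "A ** B = mat 1" and BA: "B ** A = mat 1"
  shows "matrix_inv A = B"
proof -
  have "A ** matrix_inv A = mat 1" "matrix_inv A ** A = mat 1"
    using someI_ex[of "\<lambda>B. A ** B = mat 1 \<and> B ** A = mat 1"] AB BA by (auto simp: matrix_inv_def)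
  then show ?thesis
    by (metis AB matrix_mul_assoc matrix_mul_lid matrix_mul_rid)
qed

lemma matrix_inv_invertible:
  fixes A :: "real^'n^'n"
  assumes "invertible A"
  shows "A ** matrix_inv A = mat 1" "matrix_inv A ** A = mat 1"
  using someI_ex[of "\<lambda>B. A ** B = mat 1 \<and> B ** A = mat 1"] assms
  by (auto simp: matrix_inv_def invertible_def)

lemma inner_gram_matrix:
  fixes X :: "real^'p^'n"
  shows "\<beta> \<bullet> ((transpose X ** X) *v \<beta>) = (norm (X *v \<beta>))\<^sup>2"
  by (simp add: matrix_vector_mul_assoc[symmetric] inner_commute[of \<beta>] dot_lmul_matrix[symmetric]
      power2_norm_eq_inner)

lemma inj_matrix_vector_mult_iff:
  fixes A :: "real^'p^'n"
  shows "inj ((*v) A) \<longleftrightarrow> (\<forall>x. A *v x = 0 \<longrightarrow> x = 0)"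
  using linear_inj_iff_eq_0[OF matrix_vector_mul_linear[of A]] by simp

lemma det_scaleR_matrix:
  fixes A :: "real^'n^'n"
  shows "det (c *\<^sub>R A) = c ^ CARD('n) * det A"
  unfolding det_def by (simp add: prod.distrib sum_distrib_left mult_ac)

lemma inj_gram_homotopy:
  fixes X :: "real^'p^'n"
  assumes inj: "inj ((*v) X)" and t: "0 \<le> t" "t \<le> 1"
  shows "inj ((*v) (t *\<^sub>R mat 1 + (1 - t) *\<^sub>R (transpose X ** X)))"
  unfolding inj_matrix_vector_mult_iff
proof (intro allI impI)
  fix x assume "(t *\<^sub>R mat 1 + (1 - t) *\<^sub>R (transpose X ** X)) *v x = 0"
  moreover have "x \<bullet> ((t *\<^sub>R mat 1 + (1 - t) *\<^sub>R (transpose X ** X)) *v x)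
      = t * (norm x)\<^sup>2 + (1 - t) * (norm (X *v x))\<^sup>2"
    using inner_gram_matrix[of x X]
    by (simp add: matrix_vector_mult_add_rdistrib inner_add_right
        scaleR_matrix_vector_assoc[symmetric] power2_norm_eq_inner)
  ultimately have "t * (norm x)\<^sup>2 + (1 - t) * (norm (X *v x))\<^sup>2 = 0"
    by simp
  then have "t * (norm x)\<^sup>2 = 0 \<and> (1 - t) * (norm (X *v x))\<^sup>2 = 0"
    using t by (subst (asm) add_nonneg_eq_0_iff) auto
  then show "x = 0"
    using inj unfolding inj_matrix_vector_mult_iff by (cases "t = 0") auto
qed

text \<open>The determinant of \<open>t I + (1 - t) X\<^sup>T X\<close> never vanishes on \<open>[0, 1]\<close> and is
  \<open>1\<close> at \<open>t = 1\<close>, so by the intermediate value theorem it is positive at \<open>t = 0\<close>.\<close>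

lemma det_gram_pos:
  fixes X :: "real^'p^'n"
  assumes inj: "inj ((*v) X)"
  shows "det (transpose X ** X) > 0"
proof (rule ccontr)
  define M where "M t = t *\<^sub>R (mat 1 :: real^'p^'p) + (1 - t) *\<^sub>R (transpose X ** X)" for t :: real
  assume "\<not> det (transpose X ** X) > 0"
  then have "det (M 0) \<le> 0" "det (M 1) = 1"
    by (simp_all add: M_def)
  moreover have "continuous_on {0..1} (\<lambda>t. det (M t))"
    unfolding det_def M_def by (intro continuous_intros)
  ultimately obtain t where "0 \<le> t" "t \<le> 1" "det (M t) = 0"
    using IVT'[of "\<lambda>t. det (M t)" 0 0 1] by auto
  moreover have "inj ((*v) (M t))" if "0 \<le> t" "t \<le> 1"
    unfolding M_def by (rule inj_gram_homotopy[OF inj that])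
  ultimately show False
    by (metis invertible_det_nz invertible_left_inverse matrix_left_invertible_injective)
qed

lemma invertible_gram:
  fixes X :: "real^'p^'n"
  assumes "inj ((*v) X)"
  shows "invertible (transpose X ** X)"
  using det_gram_pos[OF assms] invertible_det_nz by force

lemma mvn_density_scaled_gram_inverse:
  fixes X :: "real^'p^'n"
  assumes inj: "inj ((*v) X)" and c: "c > 0"
  shows "mvn_density 0 (c *\<^sub>R matrix_inv (transpose X ** X)) \<beta>
       = (2 * pi) powr (- real CARD('p) / 2) * sqrt (det (transpose X ** X)) * c powr (- real CARD('p) / 2)
         * exp (- (norm (X *v \<beta>))\<^sup>2 / (2 * c))"
proof -
  define M where "M = transpose X ** X"
  have M: "M ** matrix_inv M = mat 1" "matrix_inv M ** M = mat 1" "det M > 0"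
    using matrix_inv_invertible[OF invertible_gram[OF inj]] det_gram_pos[OF inj] by (simp_all add: M_def)
  have inv: "matrix_inv (c *\<^sub>R matrix_inv M) = (1 / c) *\<^sub>R M"
    by (rule matrix_inv_eqI) (use c M in \<open>simp_all add: matrix_scalar_ac scalar_matrix_assoc[symmetric]\<close>)
  have "det M * det (matrix_inv M) = 1"
    using M by (metis det_I det_mul)
  then have "det (matrix_inv M) = 1 / det M"
    using M by (simp add: field_simps)
  then have sqrt_det: "sqrt (det (c *\<^sub>R matrix_inv M)) = c powr (real CARD('p) / 2) / sqrt (det M)"
    using c M by (simp add: det_scaleR_matrix real_sqrt_divide sqrt_def root_powr_inverse
        powr_realpow[symmetric] powr_powr powr_divide)
  have quad: "(\<beta> - 0) \<bullet> (matrix_inv (c *\<^sub>R matrix_inv M) *v (\<beta> - 0)) = (norm (X *v \<beta>))\<^sup>2 / c"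
    unfolding inv using inner_gram_matrix[of \<beta> X]
    by (simp add: M_def scaleR_matrix_vector_assoc[symmetric])
  have "mvn_density 0 (c *\<^sub>R matrix_inv M) \<beta> = (2 * pi) powr (- real CARD('p) / 2) /
      (c powr (real CARD('p) / 2) / sqrt (det M)) * exp (- (1/2) * ((norm (X *v \<beta>))\<^sup>2 / c))"
    unfolding mvn_density_def sqrt_det quad ..
  then show ?thesis
    using c by (simp add: M_def powr_minus divide_simps mult_ac)
qed

section \<open>Integrating out alpha, beta and g\<close>

lemma nn_integral_separate_swap:
  fixes f :: "real \<Rightarrow> ennreal" and h :: "'a::euclidean_space \<Rightarrow> 'b::euclidean_space \<Rightarrow> ennreal"
  assumes [measurable]: "f \<in> borel_measurable borel" "(\<lambda>(x, y). h x y) \<in> borel_measurable (lborel \<Otimes>\<^sub>M lborel)"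
  shows "(\<integral>\<^sup>+z. \<integral>\<^sup>+x. \<integral>\<^sup>+y. f z * h x y \<partial>lborel \<partial>lborel \<partial>lborel)
       = (\<integral>\<^sup>+z. f z \<partial>lborel) * (\<integral>\<^sup>+y. \<integral>\<^sup>+x. h x y \<partial>lborel \<partial>lborel)"
proof -
  have "(\<integral>\<^sup>+x. \<integral>\<^sup>+y. f z * h x y \<partial>lborel \<partial>lborel) = f z * (\<integral>\<^sup>+x. \<integral>\<^sup>+y. h x y \<partial>lborel \<partial>lborel)" for z
  proof -
    have "(\<integral>\<^sup>+x. \<integral>\<^sup>+y. f z * h x y \<partial>lborel \<partial>lborel) = (\<integral>\<^sup>+x. f z * (\<integral>\<^sup>+y. h x y \<partial>lborel) \<partial>lborel)"
      by (rule nn_integral_cong) (rule nn_integral_cmult, measurable)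
    also have "\<dots> = f z * (\<integral>\<^sup>+x. \<integral>\<^sup>+y. h x y \<partial>lborel \<partial>lborel)"
      by (rule nn_integral_cmult) measurable
    finally show ?thesis .
  qed
  moreover have "(\<integral>\<^sup>+x. \<integral>\<^sup>+y. h x y \<partial>lborel \<partial>lborel) = (\<integral>\<^sup>+y. \<integral>\<^sup>+x. h x y \<partial>lborel \<partial>lborel)"
    by (rule lborel_pair.Fubini'[symmetric]) (simp add: case_prod_beta'[symmetric])
  ultimately show ?thesis
    by (simp add: nn_integral_multc)
qed

lemma norm_power2_complete_square:
  fixes u v :: "'a::real_inner"
  assumes g: "g > 0" and s: "s > 0"
  shows "(norm (v - u))\<^sup>2 / (2 * s) + (norm u)\<^sup>2 / (2 * (g * s))
       = (1 + g) / (2 * g * s) * (norm (u - (g / (1 + g)) *\<^sub>R v))\<^sup>2 + (norm v)\<^sup>2 / (2 * s * (1 + g))"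
proof -
  define A B C where "A = u \<bullet> u" and "B = u \<bullet> v" and "C = v \<bullet> v"
  have expand: "(norm (v - u))\<^sup>2 = C - 2 * B + A"
    "(norm (u - (g / (1 + g)) *\<^sub>R v))\<^sup>2 = A - 2 * (g / (1 + g)) * B + (g / (1 + g))\<^sup>2 * C"
    "(norm u)\<^sup>2 = A" "(norm v)\<^sup>2 = C"
    unfolding power2_norm_eq_inner A_def B_def C_def
    by (simp_all add: inner_diff_left inner_diff_right inner_commute power2_eq_square algebra_simps)
  \<comment> \<open>Naming \<open>1 + g\<close> stops \<open>field_simps\<close> from multiplying out the denominators.\<close>
  obtain h where h: "1 + g = h" "h > 0"
    using g by simp
  have "(C - 2 * B + A) / (2 * s) + A / (2 * (g * s))
      = (1 + g) / (2 * g * s) * (A - 2 * (g / (1 + g)) * B + (g / (1 + g))\<^sup>2 * C) + C / (2 * s * (1 + g))"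
    unfolding h using g s h(2)
    by (simp add: field_simps power2_eq_square) (simp add: h(1)[symmetric] algebra_simps)
  then show ?thesis
    using expand by simp
qed

lemma powr_hyper_g_collect:
  fixes g s p a :: real
  assumes g: "g > 0" and s: "s > 0"
  shows "g powr (- p / 2) * (1 + g) powr (- a / 2) * ((1 + g) / (2 * g * s)) powr (- p / 2)
       = (2 * s) powr (p / 2) * (1 + g) powr (- ((a + p) / 2))"
proof -
  have "((1 + g) / (2 * g * s)) powr (- p / 2) = (1 + g) powr (- p / 2) * (2 * s) powr (p / 2) * g powr (p / 2)"
    using g s by (simp add: powr_divide powr_mult powr_minus divide_simps)
  then have "g powr (- p / 2) * (1 + g) powr (- a / 2) * ((1 + g) / (2 * g * s)) powr (- p / 2)
      = (2 * s) powr (p / 2) * ((1 + g) powr (- a / 2 + - p / 2)) * (g powr (- p / 2) * g powr (p / 2))"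
    by (simp only: powr_add mult_ac)
  also have "g powr (- p / 2) * g powr (p / 2) = 1"
    using g by (simp add: powr_minus)
  also have "- a / 2 + - p / 2 = - ((a + p) / 2)"
    by (simp add: field_simps)
  finally show ?thesis
    by simp
qed

definition joint_post_const :: "real^'p^'n \<Rightarrow> real \<Rightarrow> real" where
  "joint_post_const X a = (2 * pi) powr (- real CARD('n) / 2) * (2 * pi) powr (- real CARD('p) / 2)
     * sqrt (det (transpose X ** X)) * ((a - 2) / 2)"

lemma joint_post_factorisation:
  fixes X :: "real^'p^'n"
  assumes inj: "inj ((*v) X)" and cen: "centered_design X"
    and y: "y = vec c + X *v b + r" and r_X: "\<And>\<beta>. r \<bullet> (X *v \<beta>) = 0" and r_1: "r \<bullet> vec 1 = 0"
    and g: "g > 0" and s: "s > 0"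
  shows "likelihood X y \<alpha> \<beta> s * (1 / s) * mvn_density 0 ((g * s) *\<^sub>R matrix_inv (transpose X ** X)) \<beta>
           * hyper_g_density a g
       = exp (- (\<alpha> - c)\<^sup>2 / (2 * (s / real CARD('n))))
         * (joint_post_const X a * s powr (- real CARD('n) / 2 - 1 - real CARD('p) / 2)
            * exp (- (norm r)\<^sup>2 / (2 * s)) * g powr (- real CARD('p) / 2) * (1 + g) powr (- a / 2)
            * exp (- ((norm (X *v (b - \<beta>)))\<^sup>2 / (2 * s) + (norm (X *v \<beta>))\<^sup>2 / (2 * (g * s)))))"
proof -
  define n p where "n = real CARD('n)" and "p = real CARD('p)"
  define R Q1 Q2 where "R = (norm r)\<^sup>2" and "Q1 = (norm (X *v (b - \<beta>)))\<^sup>2" and "Q2 = (norm (X *v \<beta>))\<^sup>2"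
  define E where "E = exp (- (\<alpha> - c)\<^sup>2 / (2 * (s / n)))"
  have likelihood: "likelihood X y \<alpha> \<beta> s
      = (2 * pi) powr (- n / 2) * s powr (- n / 2) * exp (- R / (2 * s)) * E * exp (- Q1 / (2 * s))"
  proof -
    have "(norm (y - vec \<alpha> - X *v \<beta>))\<^sup>2 = R + n * (c - \<alpha>)\<^sup>2 + Q1"
      unfolding y R_def n_def Q1_def by (rule residual_norm_pythagoras[OF cen r_X r_1])
    moreover have "n * (c - \<alpha>)\<^sup>2 / (2 * s) = (\<alpha> - c)\<^sup>2 / (2 * (s / n))"
      by (simp add: n_def power2_commute)
    ultimately have "exp (- (norm (y - vec \<alpha> - X *v \<beta>))\<^sup>2 / (2 * s))
        = exp (- R / (2 * s)) * E * exp (- Q1 / (2 * s))"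
      unfolding E_def by (simp add: exp_add[symmetric] add_divide_distrib diff_divide_distrib)
    moreover have "(2 * pi * s) powr (- n / 2) = (2 * pi) powr (- n / 2) * s powr (- n / 2)"
      using s by (simp add: powr_mult)
    ultimately show ?thesis
      unfolding likelihood_def n_def by (simp add: mult.assoc)
  qed
  have mvn: "mvn_density 0 ((g * s) *\<^sub>R matrix_inv (transpose X ** X)) \<beta>
      = (2 * pi) powr (- p / 2) * sqrt (det (transpose X ** X)) * (g powr (- p / 2) * s powr (- p / 2))
         * exp (- Q2 / (2 * (g * s)))"
    unfolding mvn_density_scaled_gram_inverse[OF inj mult_pos_pos[OF g s]] p_def Q2_def
    using g s by (simp add: powr_mult)
  have s_powr: "s powr (- n / 2 - 1 - p / 2) = s powr (- n / 2) * (1 / s) * s powr (- p / 2)"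
  proof -
    have "s powr (- n / 2 - 1 - p / 2) = s powr (- n / 2 + (-1) + (- p / 2))"
      by simp
    then show ?thesis
      using s by (simp only: powr_add powr_minus_divide powr_one)
  qed
  have exp_Q: "exp (- (Q1 / (2 * s) + Q2 / (2 * (g * s)))) = exp (- Q1 / (2 * s)) * exp (- Q2 / (2 * (g * s)))"
    by (simp add: exp_add[symmetric])
  show ?thesis
    unfolding likelihood mvn hyper_g_density_def joint_post_const_def n_def[symmetric] p_def[symmetric]
      R_def[symmetric] Q1_def[symmetric] Q2_def[symmetric] E_def[symmetric] s_powr exp_Q
    by (simp only: mult_ac)
qed

lemma nn_integral_beta_complete_square:
  fixes X :: "real^'p^'n"
  assumes g: "g > 0" and s: "s > 0"
  shows "(\<integral>\<^sup>+\<beta>. ennreal (exp (- ((norm (X *v (b - \<beta>)))\<^sup>2 / (2 * s) + (norm (X *v \<beta>))\<^sup>2 / (2 * (g * s))))) \<partial>lborel)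
       = ennreal (exp (- (norm (X *v b))\<^sup>2 / (2 * s * (1 + g))) * ((1 + g) / (2 * g * s)) powr (- real CARD('p) / 2))
         * design_gaussian_integral X"
proof -
  define l m Q where "l = (1 + g) / (2 * g * s)" and "m = (g / (1 + g)) *\<^sub>R b"
    and "Q = (norm (X *v b))\<^sup>2 / (2 * s * (1 + g))"
  have l: "l > 0"
    using g s by (simp add: l_def)
  have exponent: "(norm (X *v (b - \<beta>)))\<^sup>2 / (2 * s) + (norm (X *v \<beta>))\<^sup>2 / (2 * (g * s))
      = l * (norm (X *v (\<beta> - m)))\<^sup>2 + Q" for \<beta>
    using norm_power2_complete_square[OF g s, where u = "X *v \<beta>" and v = "X *v b"]
    by (simp add: l_def m_def Q_def matrix_vector_mult_diff_distrib matrix_vector_mult_scaleR)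
  have "ennreal (exp (- ((norm (X *v (b - \<beta>)))\<^sup>2 / (2 * s) + (norm (X *v \<beta>))\<^sup>2 / (2 * (g * s)))))
      = ennreal (exp (- Q)) * ennreal (exp (- l * (norm (X *v (\<beta> - m)))\<^sup>2))" for \<beta>
    unfolding exponent by (simp add: ennreal_mult[symmetric] exp_add[symmetric])
  then have "(\<integral>\<^sup>+\<beta>. ennreal (exp (- ((norm (X *v (b - \<beta>)))\<^sup>2 / (2 * s) + (norm (X *v \<beta>))\<^sup>2 / (2 * (g * s))))) \<partial>lborel)
      = (\<integral>\<^sup>+\<beta>. ennreal (exp (- Q)) * ennreal (exp (- l * (norm (X *v (\<beta> - m)))\<^sup>2)) \<partial>lborel)"
    by (simp only:)
  also have "\<dots> = ennreal (exp (- Q)) * (\<integral>\<^sup>+\<beta>. ennreal (exp (- l * (norm (X *v (\<beta> - m)))\<^sup>2)) \<partial>lborel)"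
    by (rule nn_integral_cmult) measurable
  also have "\<dots> = ennreal (exp (- Q)) * (ennreal (l powr (- real CARD('p) / 2)) * design_gaussian_integral X)"
    by (simp only: nn_integral_design_gaussian_affine[OF l])
  finally show ?thesis
    by (simp add: Q_def l_def ennreal_mult mult.assoc)
qed

lemma nn_integral_beta_posterior:
  fixes X :: "real^'p^'n"
  assumes K: "K \<ge> 0" and s: "s > 0"
  shows "(\<integral>\<^sup>+\<beta>. indicator {0<..} g * ennreal (K * s powr (- real CARD('n) / 2 - 1 - real CARD('p) / 2)
            * exp (- R / (2 * s)) * g powr (- real CARD('p) / 2) * (1 + g) powr (- a / 2)
            * exp (- ((norm (X *v (b - \<beta>)))\<^sup>2 / (2 * s) + (norm (X *v \<beta>))\<^sup>2 / (2 * (g * s))))) \<partial>lborel)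
       = ennreal (K * 2 powr (real CARD('p) / 2) * s powr (- real CARD('n) / 2 - 1) * exp (- R / (2 * s)))
         * design_gaussian_integral X
         * (ennreal ((1 + g) powr (- ((a + real CARD('p)) / 2)) * exp (- (norm (X *v b))\<^sup>2 / (2 * s * (1 + g))))
            * indicator {0<..} g)"
proof (cases "g > 0")
  case g: True
  define n p where "n = real CARD('n)" and "p = real CARD('p)"
  define C where "C = K * s powr (- n / 2 - 1 - p / 2) * exp (- R / (2 * s)) * g powr (- p / 2) * (1 + g) powr (- a / 2)"
  define E where "E = exp (- (norm (X *v b))\<^sup>2 / (2 * s * (1 + g)))"
  have C: "C \<ge> 0"
    using K by (simp add: C_def)
  have "C * ((1 + g) / (2 * g * s)) powr (- p / 2)
      = K * (s powr (- n / 2 - 1 - p / 2) * s powr (p / 2)) * 2 powr (p / 2) * exp (- R / (2 * s))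
        * (1 + g) powr (- ((a + p) / 2))"
    using powr_hyper_g_collect[OF g s, of p a] s
    by (simp add: C_def powr_mult mult_ac)
  also have "s powr (- n / 2 - 1 - p / 2) * s powr (p / 2) = s powr (- n / 2 - 1)"
    by (simp add: powr_add[symmetric])
  finally have const_eq: "C * ((1 + g) / (2 * g * s)) powr (- p / 2)
      = K * 2 powr (p / 2) * s powr (- n / 2 - 1) * exp (- R / (2 * s)) * (1 + g) powr (- ((a + p) / 2))"
    by (simp only: mult_ac)
  then have rearrange: "C * ((1 + g) / (2 * g * s)) powr (- p / 2) * E
      = (K * 2 powr (p / 2) * s powr (- n / 2 - 1) * exp (- R / (2 * s))) * ((1 + g) powr (- ((a + p) / 2)) * E)"
    by (simp only: mult.assoc[symmetric])
  have "(\<integral>\<^sup>+\<beta>. indicator {0<..} g * ennreal (K * s powr (- n / 2 - 1 - p / 2)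
            * exp (- R / (2 * s)) * g powr (- p / 2) * (1 + g) powr (- a / 2)
            * exp (- ((norm (X *v (b - \<beta>)))\<^sup>2 / (2 * s) + (norm (X *v \<beta>))\<^sup>2 / (2 * (g * s))))) \<partial>lborel)
      = (\<integral>\<^sup>+\<beta>. ennreal C * ennreal (exp (- ((norm (X *v (b - \<beta>)))\<^sup>2 / (2 * s)
            + (norm (X *v \<beta>))\<^sup>2 / (2 * (g * s))))) \<partial>lborel)"
    using g C by (simp add: C_def ennreal_mult)
  also have "\<dots> = ennreal C * (\<integral>\<^sup>+\<beta>. ennreal (exp (- ((norm (X *v (b - \<beta>)))\<^sup>2 / (2 * s)
            + (norm (X *v \<beta>))\<^sup>2 / (2 * (g * s))))) \<partial>lborel)"
    by (rule nn_integral_cmult) measurable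
  also have "\<dots> = ennreal C * (ennreal (E * ((1 + g) / (2 * g * s)) powr (- p / 2)) * design_gaussian_integral X)"
    by (simp only: nn_integral_beta_complete_square[OF g s] E_def p_def)
  also have "\<dots> = ennreal (C * ((1 + g) / (2 * g * s)) powr (- p / 2) * E) * design_gaussian_integral X"
    using C by (simp add: ennreal_mult E_def mult_ac)
  also have "\<dots> = ennreal (K * 2 powr (p / 2) * s powr (- n / 2 - 1) * exp (- R / (2 * s)))
      * design_gaussian_integral X * (ennreal ((1 + g) powr (- ((a + p) / 2)) * E) * indicator {0<..} g)"
    unfolding rearrange using g K by (subst ennreal_mult) (simp_all add: E_def mult_ac)
  finally show ?thesis
    by (simp only: E_def n_def p_def)
qed simp

lemma nn_integral_beta_g_posterior:
  fixes X :: "real^'p^'n"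
  assumes K: "K \<ge> 0" and s: "s > 0"
  shows "(\<integral>\<^sup>+g. \<integral>\<^sup>+\<beta>. indicator {0<..} g * ennreal (K * s powr (- real CARD('n) / 2 - 1 - real CARD('p) / 2)
            * exp (- R / (2 * s)) * g powr (- real CARD('p) / 2) * (1 + g) powr (- a / 2)
            * exp (- ((norm (X *v (b - \<beta>)))\<^sup>2 / (2 * s) + (norm (X *v \<beta>))\<^sup>2 / (2 * (g * s))))) \<partial>lborel \<partial>lborel)
       = ennreal (K * 2 powr (real CARD('p) / 2) * s powr (- real CARD('n) / 2 - 1) * exp (- R / (2 * s)))
         * design_gaussian_integral X
         * (\<integral>\<^sup>+g. ennreal ((1 + g) powr (- ((a + real CARD('p)) / 2)) * exp (- (norm (X *v b))\<^sup>2 / (2 * s * (1 + g))))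
            * indicator {0<..} g \<partial>lborel)"
  unfolding nn_integral_beta_posterior[OF K s] by (rule nn_integral_cmult) measurable

lemma sigma2_post_unnorm_integral_g:
  fixes X :: "real^'p^'n"
  assumes inj: "inj ((*v) X)" and cen: "centered_design X" and a: "a > 2"
    and y: "y = vec c + X *v b + r" and r_X: "\<And>\<beta>. r \<bullet> (X *v \<beta>) = 0" and r_1: "r \<bullet> vec 1 = 0"
    and s: "s > 0"
  shows "sigma2_post_unnorm X a y s
       = ennreal (sqrt (2 * pi / real CARD('n)) * joint_post_const X a * 2 powr (real CARD('p) / 2)
           * s powr (- (real CARD('n) + 1) / 2) * exp (- (norm r)\<^sup>2 / (2 * s)))
         * design_gaussian_integral X
         * (\<integral>\<^sup>+g. ennreal ((1 + g) powr (- ((a + real CARD('p)) / 2)) * exp (- (norm (X *v b))\<^sup>2 / (2 * s * (1 + g))))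
              * indicator {0<..} g \<partial>lborel)"
proof -
  define n p K R where "n = real CARD('n)" and "p = real CARD('p)" and "K = joint_post_const X a"
    and "R = (norm r)\<^sup>2"
  have n: "n > 0"
    by (simp add: n_def)
  have K: "K \<ge> 0"
    using det_gram_pos[OF inj] a by (simp add: K_def joint_post_const_def)
  define E where "E \<alpha> = ennreal (exp (- (\<alpha> - c)\<^sup>2 / (2 * (s / n))))" for \<alpha>
  define W where "W \<beta> g = indicator {0<..} g * ennreal (K * s powr (- n / 2 - 1 - p / 2)
      * exp (- R / (2 * s)) * g powr (- p / 2) * (1 + g) powr (- a / 2)
      * exp (- ((norm (X *v (b - \<beta>)))\<^sup>2 / (2 * s) + (norm (X *v \<beta>))\<^sup>2 / (2 * (g * s)))))" for \<beta> g
  have W_measurable [measurable]: "(\<lambda>(\<beta>, g). W \<beta> g) \<in> borel_measurable (lborel \<Otimes>\<^sub>M lborel)"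
    unfolding W_def by measurable
  have integrand: "indicator {0<..} g * joint_post X a y \<alpha> \<beta> g s = E \<alpha> * W \<beta> g" for \<alpha> \<beta> g
    using joint_post_factorisation[OF inj cen y r_X r_1 _ s, of g \<alpha> \<beta> a] K s
    by (cases "g > 0") (simp_all add: joint_post_def W_def E_def K_def R_def n_def p_def ennreal_mult)
  define C0 where "C0 = K * 2 powr (p / 2) * s powr (- n / 2 - 1) * exp (- R / (2 * s))"
  have "C0 \<ge> 0"
    using K by (simp add: C0_def)
  have "sigma2_post_unnorm X a y s = (\<integral>\<^sup>+\<alpha>. \<integral>\<^sup>+\<beta>. \<integral>\<^sup>+g. E \<alpha> * W \<beta> g \<partial>lborel \<partial>lborel \<partial>lborel)"
    using s by (simp only: sigma2_post_unnorm_def integrand if_True)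
  also have "\<dots> = (\<integral>\<^sup>+\<alpha>. E \<alpha> \<partial>lborel) * (\<integral>\<^sup>+g. \<integral>\<^sup>+\<beta>. W \<beta> g \<partial>lborel \<partial>lborel)"
    by (rule nn_integral_separate_swap) (simp_all add: E_def)
  also have "(\<integral>\<^sup>+\<alpha>. E \<alpha> \<partial>lborel) = ennreal (sqrt (2 * pi * (s / n)))"
    unfolding E_def by (rule nn_integral_gaussian_kernel) (use s n in simp)
  also have "(\<integral>\<^sup>+g. \<integral>\<^sup>+\<beta>. W \<beta> g \<partial>lborel \<partial>lborel) = ennreal C0 * design_gaussian_integral X
      * (\<integral>\<^sup>+g. ennreal ((1 + g) powr (- ((a + p) / 2)) * exp (- (norm (X *v b))\<^sup>2 / (2 * s * (1 + g))))
          * indicator {0<..} g \<partial>lborel)"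
    unfolding W_def C0_def n_def p_def by (rule nn_integral_beta_g_posterior[OF K s])
  finally have "sigma2_post_unnorm X a y s = ennreal (sqrt (2 * pi * (s / n)) * C0) * design_gaussian_integral X
      * (\<integral>\<^sup>+g. ennreal ((1 + g) powr (- ((a + p) / 2)) * exp (- (norm (X *v b))\<^sup>2 / (2 * s * (1 + g))))
          * indicator {0<..} g \<partial>lborel)"
    using \<open>C0 \<ge> 0\<close> s n by (simp add: ennreal_mult mult.assoc)
  also have "sqrt (2 * pi * (s / n)) = sqrt (2 * pi / n) * s powr (1 / 2)"
    using s by (simp add: powr_half_sqrt real_sqrt_mult[symmetric])
  also have "sqrt (2 * pi / n) * s powr (1 / 2) * C0
      = sqrt (2 * pi / n) * K * 2 powr (p / 2) * s powr (- (n + 1) / 2) * exp (- R / (2 * s))"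
    by (simp add: C0_def powr_add[symmetric] field_simps)
  finally show ?thesis
    by (simp only: n_def p_def K_def R_def)
qed

section \<open>The marginal posterior kernel of sigma squared\<close>

definition inv_gamma_tail_integral :: "real \<Rightarrow> real \<Rightarrow> real \<Rightarrow> ennreal" where
  "inv_gamma_tail_integral d s L =
     (\<integral>\<^sup>+t. ennreal (t powr (- d) * exp (- 1 / (2 * s * t))) * indicator {L<..} t \<partial>lborel)"

lemma borel_measurable_inv_gamma_tail_integral [measurable]:
  "(\<lambda>s. inv_gamma_tail_integral d s L) \<in> borel_measurable borel"
  unfolding inv_gamma_tail_integral_def by measurable

lemma inv_gamma_tail_integral_0:
  assumes s: "s > 0" and d: "d > 1"
  shows "inv_gamma_tail_integral d s 0 = ennreal ((2 * s) powr (d - 1) * Gamma (d - 1))"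
proof -
  have kernel: "t powr (- d) * exp (- 1 / (2 * s * t)) = t powr (- ((d - 1) + 1)) * exp (- (1 / (2 * s)) / t)"
    for t
    by simp
  have "inv_gamma_tail_integral d s 0 = ennreal ((1 / (2 * s)) powr (- (d - 1)) * Gamma (d - 1))"
    unfolding inv_gamma_tail_integral_def kernel
    by (rule nn_integral_inverse_gamma_kernel) (use s d in auto)
  also have "(1 / (2 * s)) powr (- (d - 1)) = (2 * s) powr (d - 1)"
    using s by (simp only: powr_minus) (simp add: powr_divide)
  finally show ?thesis .
qed

lemma inv_gamma_tail_integral_le_0:
  assumes "L \<ge> 0"
  shows "inv_gamma_tail_integral d s L \<le> inv_gamma_tail_integral d s 0"
  unfolding inv_gamma_tail_integral_def
  using assms by (intro nn_integral_mono mult_left_mono) (auto simp: indicator_def)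

lemma inv_gamma_tail_integral_tendsto_0:
  assumes s: "s > 0" and d: "d > 1" and L: "\<And>N. L N \<ge> 0" "L \<longlonglongrightarrow> 0"
  shows "(\<lambda>N. inv_gamma_tail_integral d s (L N)) \<longlonglongrightarrow> inv_gamma_tail_integral d s 0"
  unfolding inv_gamma_tail_integral_def
proof (rule nn_integral_dominated_convergence)
  show "(\<integral>\<^sup>+t. ennreal (t powr (- d) * exp (- 1 / (2 * s * t))) * indicator {0<..} t \<partial>lborel) < \<infinity>"
    using inv_gamma_tail_integral_0[OF s d] by (simp add: inv_gamma_tail_integral_def)
  show "AE t in lborel. ennreal (t powr (- d) * exp (- 1 / (2 * s * t))) * indicator {L N<..} t
      \<le> ennreal (t powr (- d) * exp (- 1 / (2 * s * t))) * indicator {0<..} t" for N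
    using L(1)[of N] by (intro AE_I2 mult_left_mono) (auto simp: indicator_def)
  show "AE t in lborel. (\<lambda>N. ennreal (t powr (- d) * exp (- 1 / (2 * s * t))) * indicator {L N<..} t)
      \<longlonglongrightarrow> ennreal (t powr (- d) * exp (- 1 / (2 * s * t))) * indicator {0<..} t"
  proof (rule AE_I2)
    fix t :: real
    have "\<forall>\<^sub>F N in sequentially. indicator {L N<..} t = (indicator {0<..} t :: ennreal)"
    proof (cases "t > 0")
      case True
      show ?thesis
        using order_tendstoD(2)[OF L(2) True] by eventually_elim (use True in \<open>simp add: indicator_def\<close>)
    next
      case False
      then have "t \<notin> {L N<..}" for N
        using L(1)[of N] by simp
      then show ?thesis
        using False by (intro always_eventually allI) simp
    qed
    then show "(\<lambda>N. ennreal (t powr (- d) * exp (- 1 / (2 * s * t))) * indicator {L N<..} t)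
      \<longlonglongrightarrow> ennreal (t powr (- d) * exp (- 1 / (2 * s * t))) * indicator {0<..} t"
      by (rule tendsto_eventually[OF eventually_mono]) simp
  qed
qed measurable

lemma nn_integral_hyper_g_substitution:
  assumes Q: "Q > 0" and s: "s > 0"
  shows "(\<integral>\<^sup>+g. ennreal ((1 + g) powr (- d) * exp (- Q / (2 * s * (1 + g)))) * indicator {0<..} g \<partial>lborel)
       = ennreal (Q powr (1 - d)) * inv_gamma_tail_integral d s (1 / Q)"
proof -
  have "(\<integral>\<^sup>+g. ennreal ((1 + g) powr (- d) * exp (- Q / (2 * s * (1 + g)))) * indicator {0<..} g \<partial>lborel)
      = ennreal \<bar>Q\<bar> * (\<integral>\<^sup>+t. ennreal ((1 + (-1 + Q * t)) powr (- d) * exp (- Q / (2 * s * (1 + (-1 + Q * t)))))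
            * indicator {0<..} (-1 + Q * t) \<partial>lborel)"
    by (rule nn_integral_real_affine) (use Q in auto)
  also have "(\<lambda>t. ennreal ((1 + (-1 + Q * t)) powr (- d) * exp (- Q / (2 * s * (1 + (-1 + Q * t)))))
            * indicator {0<..} (-1 + Q * t))
      = (\<lambda>t. ennreal (Q powr (- d)) * (ennreal (t powr (- d) * exp (- 1 / (2 * s * t))) * indicator {1 / Q<..} t))"
  proof
    fix t
    have "-1 + Q * t > 0 \<longleftrightarrow> t > 1 / Q"
      using Q by (simp add: field_simps)
    moreover have "t > 1 / Q \<Longrightarrow> t > 0"
      using Q by (meson divide_pos_pos less_trans zero_less_one)
    ultimately show "ennreal ((1 + (-1 + Q * t)) powr (- d) * exp (- Q / (2 * s * (1 + (-1 + Q * t)))))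
        * indicator {0<..} (-1 + Q * t)
        = ennreal (Q powr (- d)) * (ennreal (t powr (- d) * exp (- 1 / (2 * s * t))) * indicator {1 / Q<..} t)"
      using Q by (auto simp: powr_mult ennreal_mult[symmetric] mult_ac indicator_def)
  qed
  also have "ennreal \<bar>Q\<bar> * (\<integral>\<^sup>+t. ennreal (Q powr (- d)) * (ennreal (t powr (- d) * exp (- 1 / (2 * s * t)))
      * indicator {1 / Q<..} t) \<partial>lborel) = ennreal (Q * Q powr (- d)) * inv_gamma_tail_integral d s (1 / Q)"
    unfolding inv_gamma_tail_integral_def using Q
    by (subst nn_integral_cmult) (auto simp: ennreal_mult mult.assoc)
  also have "Q * Q powr (- d) = Q powr (1 - d)"
    using Q by (simp add: powr_diff powr_minus_divide)
  finally show ?thesis .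
qed

(* After integrating out alpha, beta and g (substituting 1 + g = t |X b|^2), the marginal
   posterior density of s = sigma^2 is a constant multiple of sigma2_kernel e R d L with
   L = 1 / |X b|^2; letting L tend to 0 gives the inverse gamma kernel. *)
definition sigma2_kernel :: "real \<Rightarrow> real \<Rightarrow> real \<Rightarrow> real \<Rightarrow> real \<Rightarrow> ennreal" where
  "sigma2_kernel e R d L s =
     ennreal (s powr e * exp (- R / (2 * s))) * indicator {0<..} s * inv_gamma_tail_integral d s L"

lemma borel_measurable_sigma2_kernel [measurable]: "sigma2_kernel e R d L \<in> borel_measurable borel"
proof -
  have "(\<lambda>s. sigma2_kernel e R d L s) \<in> borel_measurable borel"
    unfolding sigma2_kernel_def by measurable
  then show ?thesis
    by simp
qed

lemma sigma2_post_unnorm_eq_kernel: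
  fixes X :: "real^'p^'n"
  assumes inj: "inj ((*v) X)" and cen: "centered_design X" and a: "a > 2"
    and y: "y = vec c + X *v b + r" and r_X: "\<And>\<beta>. r \<bullet> (X *v \<beta>) = 0" and r_1: "r \<bullet> vec 1 = 0"
    and Q: "X *v b \<noteq> 0"
  obtains C where "0 < C" "C < \<infinity>"
    "sigma2_post_unnorm X a y = (\<lambda>s. C * sigma2_kernel (- (real CARD('n) + 1) / 2) ((norm r)\<^sup>2)
       ((a + real CARD('p)) / 2) (1 / (norm (X *v b))\<^sup>2) s)"
proof
  define Q d where "Q = (norm (X *v b))\<^sup>2" and "d = (a + real CARD('p)) / 2"
  have "Q > 0"
    using Q by (simp add: Q_def)
  have K: "joint_post_const X a > 0"
    using det_gram_pos[OF inj] a by (simp add: joint_post_const_def)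
  define c0 where "c0 = sqrt (2 * pi / real CARD('n)) * joint_post_const X a * 2 powr (real CARD('p) / 2)
    * Q powr (1 - d)"
  have "c0 > 0"
    using K \<open>Q > 0\<close> by (simp add: c0_def)
  then show "0 < ennreal c0 * design_gaussian_integral X" "ennreal c0 * design_gaussian_integral X < \<infinity>"
    using design_gaussian_integral_pos[of X] design_gaussian_integral_finite[OF inj]
    by (simp_all add: ennreal_mult_less_top ennreal_zero_less_mult_iff)
  show "sigma2_post_unnorm X a y = (\<lambda>s. ennreal c0 * design_gaussian_integral X * sigma2_kernel
      (- (real CARD('n) + 1) / 2) ((norm r)\<^sup>2) d (1 / Q) s)"
  proof
    fix s :: real
    show "sigma2_post_unnorm X a y s = ennreal c0 * design_gaussian_integral X * sigma2_kernel
      (- (real CARD('n) + 1) / 2) ((norm r)\<^sup>2) d (1 / Q) s"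
    proof (cases "s > 0")
      case s: True
      have "sigma2_post_unnorm X a y s
          = ennreal (sqrt (2 * pi / real CARD('n)) * joint_post_const X a * 2 powr (real CARD('p) / 2)
              * s powr (- (real CARD('n) + 1) / 2) * exp (- (norm r)\<^sup>2 / (2 * s)))
            * design_gaussian_integral X * (ennreal (Q powr (1 - d)) * inv_gamma_tail_integral d s (1 / Q))"
        using sigma2_post_unnorm_integral_g[OF inj cen a y r_X r_1 s]
          nn_integral_hyper_g_substitution[OF \<open>Q > 0\<close> s, of d]
        by (simp only: Q_def d_def)
      then show ?thesis
        using s K by (simp add: sigma2_kernel_def c0_def ennreal_mult mult_ac)
    qed (simp add: sigma2_post_unnorm_def sigma2_kernel_def)
  qed
qed

lemma sigma2_kernel_0:
  assumes d: "d > 1" and e: "e + d - 1 = - (k + 1)"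
  shows "sigma2_kernel e R d 0 s = ennreal (2 powr (d - 1) * Gamma (d - 1))
           * (ennreal (s powr (- (k + 1)) * exp (- (R / 2) / s)) * indicator {0<..} s)"
proof (cases "s > 0")
  case s: True
  have "s powr e * ((2 * s) powr (d - 1) * Gamma (d - 1)) = 2 powr (d - 1) * Gamma (d - 1) * s powr (e + (d - 1))"
    using s by (simp add: powr_mult powr_add)
  moreover have "e + (d - 1) = - (k + 1)"
    using e by simp
  ultimately show ?thesis
    using s d Gamma_real_pos[of "d - 1"]
    by (simp add: sigma2_kernel_def inv_gamma_tail_integral_0 ennreal_mult[symmetric] mult_ac)
qed (simp add: sigma2_kernel_def)

lemma nn_integral_sigma2_kernel_0:
  assumes d: "d > 1" and e: "e + d - 1 = - (k + 1)" and k: "k > 0" and R: "R > 0"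
  shows "(\<integral>\<^sup>+s. sigma2_kernel e R d 0 s \<partial>lborel)
       = ennreal (2 powr (d - 1) * Gamma (d - 1) * ((R / 2) powr (- k) * Gamma k))"
proof -
  have "(\<integral>\<^sup>+s. sigma2_kernel e R d 0 s \<partial>lborel) = ennreal (2 powr (d - 1) * Gamma (d - 1))
      * (\<integral>\<^sup>+s. ennreal (s powr (- (k + 1)) * exp (- (R / 2) / s)) * indicator {0<..} s \<partial>lborel)"
    unfolding sigma2_kernel_0[OF d e] by (rule nn_integral_cmult) measurable
  also have "\<dots> = ennreal (2 powr (d - 1) * Gamma (d - 1)) * ennreal ((R / 2) powr (- k) * Gamma k)"
    by (subst nn_integral_inverse_gamma_kernel[OF k]) (use R in simp_all)
  finally show ?thesis
    using d k Gamma_real_pos[of "d - 1"] Gamma_real_pos[of k] by (simp add: ennreal_mult)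
qed

lemma sigma2_kernel_tendsto:
  assumes d: "d > 1" and e: "e + d - 1 = - (k + 1)" and k: "k > 0" and R: "R > 0"
    and L: "\<And>N. L N \<ge> 0" "L \<longlonglongrightarrow> 0" and A [measurable]: "A \<in> sets borel"
  shows "(\<lambda>N. \<integral>\<^sup>+s. sigma2_kernel e R d (L N) s * indicator A s \<partial>lborel)
           \<longlonglongrightarrow> (\<integral>\<^sup>+s. sigma2_kernel e R d 0 s * indicator A s \<partial>lborel)"
proof (rule nn_integral_dominated_convergence)
  have "(\<integral>\<^sup>+s. sigma2_kernel e R d 0 s * indicator A s \<partial>lborel) \<le> (\<integral>\<^sup>+s. sigma2_kernel e R d 0 s \<partial>lborel)"
    by (intro nn_integral_mono) (simp add: indicator_def)
  then show "(\<integral>\<^sup>+s. sigma2_kernel e R d 0 s * indicator A s \<partial>lborel) < \<infinity>"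
    using nn_integral_sigma2_kernel_0[OF d e k R] by (simp add: order.strict_trans1)
  show "AE s in lborel. sigma2_kernel e R d (L N) s * indicator A s \<le> sigma2_kernel e R d 0 s * indicator A s"
    for N
    using inv_gamma_tail_integral_le_0[OF L(1)]
    by (intro AE_I2 mult_right_mono) (simp_all add: sigma2_kernel_def mult_left_mono)
  show "AE s in lborel. (\<lambda>N. sigma2_kernel e R d (L N) s * indicator A s)
           \<longlonglongrightarrow> sigma2_kernel e R d 0 s * indicator A s"
  proof (rule AE_I2)
    fix s :: real
    show "(\<lambda>N. sigma2_kernel e R d (L N) s * indicator A s) \<longlonglongrightarrow> sigma2_kernel e R d 0 s * indicator A s"
    proof (cases "s > 0")
      case True
      define c where "c = ennreal (s powr e * exp (- R / (2 * s))) * indicator {0<..} s * indicator A s"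
      have "(\<lambda>N. c * inv_gamma_tail_integral d s (L N)) \<longlonglongrightarrow> c * inv_gamma_tail_integral d s 0"
        by (rule ennreal_tendsto_cmult[OF _ inv_gamma_tail_integral_tendsto_0[OF True d L]])
          (simp add: c_def indicator_def)
      then show ?thesis
        by (simp add: sigma2_kernel_def c_def mult_ac)
    qed (simp add: sigma2_kernel_def)
  qed
qed measurable

lemma inv_gamma_measure_normalised_sigma2_kernel:
  assumes d: "d > 1" and e: "e + d - 1 = - (k + 1)" and k: "k > 0" and R: "R > 0"
  shows "inv_gamma_measure k (2 / R)
       = density lborel (\<lambda>s. sigma2_kernel e R d 0 s / (\<integral>\<^sup>+t. sigma2_kernel e R d 0 t \<partial>lborel))"
  unfolding inv_gamma_measure_def
proof (rule density_cong)
  define C where "C = 2 powr (d - 1) * Gamma (d - 1)"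
  have "C > 0" "Gamma k > 0"
    using d k by (simp_all add: C_def Gamma_real_pos)
  show "AE s in lborel. ennreal (inv_gamma_density k (2 / R) s)
      = sigma2_kernel e R d 0 s / (\<integral>\<^sup>+t. sigma2_kernel e R d 0 t \<partial>lborel)"
  proof (rule AE_I2)
    fix s :: real
    show "ennreal (inv_gamma_density k (2 / R) s)
      = sigma2_kernel e R d 0 s / (\<integral>\<^sup>+t. sigma2_kernel e R d 0 t \<partial>lborel)"
    proof (cases "s > 0")
      case s: True
      have "inv_gamma_density k (2 / R) s
          = C * (s powr (- (k + 1)) * exp (- (R / 2) / s)) / (C * ((R / 2) powr (- k) * Gamma k))"
        using s R \<open>C > 0\<close> by (simp add: inv_gamma_density_def powr_minus field_simps)
      then show ?thesis
        using s R \<open>C > 0\<close> \<open>Gamma k > 0\<close>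
        by (subst nn_integral_sigma2_kernel_0[OF d e k R])
          (simp add: sigma2_kernel_0[OF d e] C_def[symmetric] ennreal_mult[symmetric] divide_ennreal)
    qed (simp add: inv_gamma_density_def sigma2_kernel_def)
  qed
qed (simp_all add: inv_gamma_density_def)

section \<open>Weak convergence of normalised densities\<close>

lemma normalised_density_cmult:
  fixes f :: "real \<Rightarrow> ennreal"
  assumes [measurable]: "f \<in> borel_measurable borel" and c: "0 < c" "c < \<infinity>"
  shows "(\<lambda>s. c * f s / (\<integral>\<^sup>+t. c * f t \<partial>lborel)) = (\<lambda>s. f s / (\<integral>\<^sup>+t. f t \<partial>lborel))"
proof -
  have "c \<noteq> 0" "c \<noteq> \<infinity>"
    using c by auto
  then show ?thesis
    by (subst nn_integral_cmult) (simp_all add: mult.commute[of c] divide_mult_eq)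
qed

lemma measure_normalised_density:
  fixes f :: "real \<Rightarrow> ennreal"
  assumes [measurable]: "f \<in> borel_measurable borel" "A \<in> sets borel"
    and pos: "0 < (\<integral>\<^sup>+s. f s \<partial>lborel)" and fin: "(\<integral>\<^sup>+s. f s \<partial>lborel) < \<infinity>"
  shows "measure (density lborel (\<lambda>s. f s / (\<integral>\<^sup>+t. f t \<partial>lborel))) A
       = enn2real (\<integral>\<^sup>+s. f s * indicator A s \<partial>lborel) / enn2real (\<integral>\<^sup>+s. f s \<partial>lborel)"
proof -
  define F where "F = (\<integral>\<^sup>+s. f s \<partial>lborel)"
  have "(\<integral>\<^sup>+s. f s * indicator A s \<partial>lborel) \<le> F"
    unfolding F_def by (intro nn_integral_mono) (simp add: indicator_def)
  then have fin_A: "(\<integral>\<^sup>+s. f s * indicator A s \<partial>lborel) < \<infinity>"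
    using fin by (simp add: F_def order.strict_trans1)
  have "emeasure (density lborel (\<lambda>s. f s / F)) A = (\<integral>\<^sup>+s. f s / F * indicator A s \<partial>lborel)"
    by (rule emeasure_density) measurable
  also have "\<dots> = (\<integral>\<^sup>+s. inverse F * (f s * indicator A s) \<partial>lborel)"
    by (simp add: divide_ennreal_def mult_ac)
  also have "\<dots> = inverse F * (\<integral>\<^sup>+s. f s * indicator A s \<partial>lborel)"
    by (rule nn_integral_cmult) measurable
  finally have "emeasure (density lborel (\<lambda>s. f s / F)) A = (\<integral>\<^sup>+s. f s * indicator A s \<partial>lborel) / F"
    by (simp only: divide_ennreal_def mult.commute)
  moreover obtain a where "(\<integral>\<^sup>+s. f s * indicator A s \<partial>lborel) = ennreal a" "a \<ge> 0"
    using fin_A by (cases "\<integral>\<^sup>+s. f s * indicator A s \<partial>lborel" rule: ennreal_cases) auto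
  moreover obtain b where b: "F = ennreal b" "b \<ge> 0"
    using fin unfolding F_def by (cases "\<integral>\<^sup>+s. f s \<partial>lborel" rule: ennreal_cases) auto
  moreover have "b > 0"
    using pos b by (simp add: F_def)
  ultimately show ?thesis
    by (simp add: measure_def F_def[symmetric] divide_ennreal)
qed

lemma weak_conv_m_normalised_densities:
  fixes f :: "nat \<Rightarrow> real \<Rightarrow> ennreal" and h :: "real \<Rightarrow> ennreal"
  assumes [measurable]: "\<And>N. f N \<in> borel_measurable borel" "h \<in> borel_measurable borel"
    and lim: "\<And>A. A \<in> sets borel \<Longrightarrow>
      (\<lambda>N. \<integral>\<^sup>+s. f N s * indicator A s \<partial>lborel) \<longlonglongrightarrow> (\<integral>\<^sup>+s. h s * indicator A s \<partial>lborel)"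
    and pos: "0 < (\<integral>\<^sup>+s. h s \<partial>lborel)" and fin: "(\<integral>\<^sup>+s. h s \<partial>lborel) < \<infinity>"
  shows "weak_conv_m (\<lambda>N. density lborel (\<lambda>s. f N s / (\<integral>\<^sup>+t. f N t \<partial>lborel)))
           (density lborel (\<lambda>s. h s / (\<integral>\<^sup>+t. h t \<partial>lborel)))"
  unfolding weak_conv_m_def weak_conv_def cdf_def
proof (intro allI impI)
  fix x :: real
  have total: "(\<lambda>N. \<integral>\<^sup>+s. f N s \<partial>lborel) \<longlonglongrightarrow> (\<integral>\<^sup>+s. h s \<partial>lborel)"
    using lim[of UNIV] by simp
  have "(\<integral>\<^sup>+s. h s * indicator {..x} s \<partial>lborel) \<le> (\<integral>\<^sup>+s. h s \<partial>lborel)"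
    by (intro nn_integral_mono) (simp add: indicator_def)
  then have "(\<integral>\<^sup>+s. h s * indicator {..x} s \<partial>lborel) \<noteq> \<infinity>"
    using fin by auto
  then have "(\<lambda>N. enn2real (\<integral>\<^sup>+s. f N s * indicator {..x} s \<partial>lborel))
      \<longlonglongrightarrow> enn2real (\<integral>\<^sup>+s. h s * indicator {..x} s \<partial>lborel)"
    using lim[of "{..x}"] by (intro tendsto_enn2real) (simp_all add: less_top)
  moreover have "(\<lambda>N. enn2real (\<integral>\<^sup>+s. f N s \<partial>lborel)) \<longlonglongrightarrow> enn2real (\<integral>\<^sup>+s. h s \<partial>lborel)"
    using fin total by (intro tendsto_enn2real) simp_all
  ultimately have "(\<lambda>N. enn2real (\<integral>\<^sup>+s. f N s * indicator {..x} s \<partial>lborel) / enn2real (\<integral>\<^sup>+s. f N s \<partial>lborel))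
      \<longlonglongrightarrow> enn2real (\<integral>\<^sup>+s. h s * indicator {..x} s \<partial>lborel) / enn2real (\<integral>\<^sup>+s. h s \<partial>lborel)"
    using pos fin by (intro tendsto_divide) (auto simp: enn2real_eq_0_iff)
  moreover have "\<forall>\<^sub>F N in sequentially. 0 < (\<integral>\<^sup>+s. f N s \<partial>lborel) \<and> (\<integral>\<^sup>+s. f N s \<partial>lborel) < \<infinity>"
    using order_tendstoD(1)[OF total pos] order_tendstoD(2)[OF total fin] by eventually_elim simp
  then have "\<forall>\<^sub>F N in sequentially.
      enn2real (\<integral>\<^sup>+s. f N s * indicator {..x} s \<partial>lborel) / enn2real (\<integral>\<^sup>+s. f N s \<partial>lborel)
      = measure (density lborel (\<lambda>s. f N s / (\<integral>\<^sup>+t. f N t \<partial>lborel))) {..x}"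
    by eventually_elim (simp add: measure_normalised_density)
  ultimately show "(\<lambda>N. measure (density lborel (\<lambda>s. f N s / (\<integral>\<^sup>+t. f N t \<partial>lborel))) {..x})
      \<longlonglongrightarrow> measure (density lborel (\<lambda>s. h s / (\<integral>\<^sup>+t. h t \<partial>lborel))) {..x}"
    using pos fin by (simp add: measure_normalised_density Lim_transform_eventually)
qed

lemma weak_conv_m_eventually_eq:
  assumes M: "weak_conv_m M L" and eq: "\<forall>\<^sub>F N in sequentially. M' N = M N"
  shows "weak_conv_m M' L"
  unfolding weak_conv_m_def weak_conv_def
proof (intro allI impI)
  fix x
  assume "isCont (cdf L) x"
  then have "(\<lambda>N. cdf (M N) x) \<longlonglongrightarrow> cdf L x"
    using M by (simp add: weak_conv_m_def weak_conv_def)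
  moreover have "\<forall>\<^sub>F N in sequentially. cdf (M N) x = cdf (M' N) x"
    using eq by eventually_elim simp
  ultimately show "(\<lambda>N. cdf (M' N) x) \<longlonglongrightarrow> cdf L x"
    by (rule Lim_transform_eventually)
qed

section \<open>The limit of the posterior of sigma squared\<close>

lemma sigma2_posterior_eq_normalised_kernel:
  fixes X :: "real^'p^'n"
  assumes inj: "inj ((*v) X)" and cen: "centered_design X" and a: "a > 2"
    and y: "y = vec c + X *v b + r" and r_X: "\<And>\<beta>. r \<bullet> (X *v \<beta>) = 0" and r_1: "r \<bullet> vec 1 = 0"
    and Q: "X *v b \<noteq> 0"
  defines "h \<equiv> sigma2_kernel (- (real CARD('n) + 1) / 2) ((norm r)\<^sup>2) ((a + real CARD('p)) / 2)
    (1 / (norm (X *v b))\<^sup>2)"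
  shows "sigma2_posterior X a y = density lborel (\<lambda>s. h s / (\<integral>\<^sup>+t. h t \<partial>lborel))"
proof -
  obtain C where "0 < C" "C < \<infinity>" "sigma2_post_unnorm X a y = (\<lambda>s. C * h s)"
    using sigma2_post_unnorm_eq_kernel[OF inj cen a y r_X r_1 Q] unfolding h_def by blast
  then show ?thesis
    unfolding sigma2_posterior_def h_def by (simp add: normalised_density_cmult)
qed

lemma filterlim_norm_matrix_vector_mult_at_top:
  fixes X :: "real^'p^'n" and u :: "'a \<Rightarrow> real^'p"
  assumes inj: "inj ((*v) X)" and u: "filterlim (\<lambda>x. norm (u x)) at_top F"
  shows "filterlim (\<lambda>x. norm (X *v (u x + v))) at_top F"
proof -
  obtain B where B: "B > 0" "\<And>x. B * norm x \<le> norm (X *v x)"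
    using linear_inj_bounded_below_pos[of "(*v) X"] inj by (metis matrix_vector_mul_linear)
  have "filterlim (\<lambda>x. - norm v + norm (u x)) at_top F"
    by (rule filterlim_tendsto_add_at_top[OF tendsto_const u])
  then have lim: "filterlim (\<lambda>x. B * (- norm v + norm (u x))) at_top F"
    using B(1) by (intro filterlim_tendsto_pos_mult_at_top[OF tendsto_const]) simp_all
  have bound: "B * (- norm v + norm (u x)) \<le> norm (X *v (u x + v))" for x
  proof -
    have "- norm v + norm (u x) \<le> norm (u x + v)"
      using norm_triangle_ineq4[of "u x + v" v] by simp
    then have "B * (- norm v + norm (u x)) \<le> B * norm (u x + v)"
      using B(1) by (rule mult_left_mono[OF _ less_imp_le])
    also have "\<dots> \<le> norm (X *v (u x + v))"
      by (rule B(2))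
    finally show ?thesis .
  qed
  show ?thesis
    using bound by (intro filterlim_at_top_mono[OF lim] always_eventually allI)
qed

lemma weak_conv_sigma2_posterior:
  fixes X :: "real^'p^'n" and b :: "nat \<Rightarrow> real^'p" and y :: "nat \<Rightarrow> real^'n"
  assumes inj: "inj ((*v) X)" and cen: "centered_design X" and a: "a > 2"
    and y: "\<And>N. y N = vec c + X *v b N + r" and r_X: "\<And>\<beta>. r \<bullet> (X *v \<beta>) = 0" and r_1: "r \<bullet> vec 1 = 0"
    and r: "r \<noteq> 0" and n: "real CARD('n) > a + real CARD('p) - 1"
    and b: "filterlim (\<lambda>N. norm (X *v b N)) at_top sequentially"
  shows "weak_conv_m (\<lambda>N. sigma2_posterior X a (y N))
           (inv_gamma_measure ((real CARD('n) + 1 - a - real CARD('p)) / 2) (2 / (norm r)\<^sup>2))"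
proof -
  define e d k R where "e = - (real CARD('n) + 1) / 2" and "d = (a + real CARD('p)) / 2"
    and "k = (real CARD('n) + 1 - a - real CARD('p)) / 2" and "R = (norm r)\<^sup>2"
  define L where "L = (\<lambda>N. 1 / (norm (X *v b N))\<^sup>2)"
  have d: "d > 1" and k: "k > 0" and R: "R > 0" and e: "e + d - 1 = - (k + 1)"
    using a n r by (simp_all add: d_def k_def R_def e_def field_simps)
  have L: "L N \<ge> 0" "L \<longlonglongrightarrow> 0" for N
    using tendsto_inverse_0_at_top[OF filterlim_pow_at_top[OF _ b, of 2]]
    by (simp_all add: L_def inverse_eq_divide)
  have "weak_conv_m (\<lambda>N. density lborel (\<lambda>s. sigma2_kernel e R d (L N) s / (\<integral>\<^sup>+t. sigma2_kernel e R d (L N) t \<partial>lborel)))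
      (inv_gamma_measure k (2 / R))"
    unfolding inv_gamma_measure_normalised_sigma2_kernel[OF d e k R]
    using sigma2_kernel_tendsto[OF d e k R L] nn_integral_sigma2_kernel_0[OF d e k R] d k R
    by (intro weak_conv_m_normalised_densities) (simp_all add: Gamma_real_pos)
  moreover have "\<forall>\<^sub>F N in sequentially. 1 \<le> norm (X *v b N)"
    using b by (simp add: filterlim_at_top)
  then have "\<forall>\<^sub>F N in sequentially. X *v b N \<noteq> 0"
    by eventually_elim auto
  then have "\<forall>\<^sub>F N in sequentially. sigma2_posterior X a (y N)
      = density lborel (\<lambda>s. sigma2_kernel e R d (L N) s / (\<integral>\<^sup>+t. sigma2_kernel e R d (L N) t \<partial>lborel))"
    by eventually_elim (simp add: sigma2_posterior_eq_normalised_kernel[OF inj cen a y r_X r_1]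
        e_def d_def R_def L_def)
  ultimately show ?thesis
    unfolding k_def R_def by (rule weak_conv_m_eventually_eq)
qed

theorem corollary3p1:
  fixes X :: "real^'p^'n"
    and S :: "'p set"
    and a \<alpha> :: real
    and \<beta>2 :: "real^'p"
    and \<epsilon> :: "real^'n"
    and \<beta> :: "nat \<Rightarrow> real^'p"
    and y :: "nat \<Rightarrow> real^'n"
  assumes a_gt: "a > 2"
    and centered: "centered_design X"
    and full_rank: "rank X = CARD('p)"
    and block2_fixed: "\<And>N j. j \<notin> S \<Longrightarrow> \<beta> N $ j = \<beta>2 $ j"
    and block1_diverges:
      "filterlim (\<lambda>N. norm (\<chi> j. if j \<in> S then \<beta> N $ j else 0)) at_top sequentially"
    and data: "\<And>N. y N = vec \<alpha> + X *v \<beta> N + \<epsilon>"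
    and n_large: "real CARD('n) > a + real CARD('p) - 1"
    and resid_pos: "sigma_hat2 X (y 0) > 0"
  shows "(\<forall>N. sigma_hat2 X (y N) = sigma_hat2 X (y 0)) \<and>
         weak_conv_m (\<lambda>N. sigma2_posterior X a (y N))
           (inv_gamma_measure ((real CARD('n) + 1 - a - real CARD('p)) / 2)
              (2 / ((real CARD('n) - real CARD('p) - 1) * sigma_hat2 X (y 0))))"
proof -
  have inj: "inj ((*v) X)"
    using full_rank full_rank_injective by blast
  obtain c b r where \<epsilon>: "\<epsilon> = vec c + X *v b + r" and r_X: "\<And>\<beta>. r \<bullet> (X *v \<beta>) = 0" and r_1: "r \<bullet> vec 1 = 0"
    using decompose_intercept_design[of \<epsilon> X] by blast
  have y: "y N = vec (\<alpha> + c) + X *v (\<beta> N + b) + r" for N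
    using data[of N] \<epsilon> by (simp add: matrix_vector_right_distrib vec_eq_iff algebra_simps)
  have sigma_hat2: "sigma_hat2 X (y N) = (norm r)\<^sup>2 / (real CARD('n) - real CARD('p) - 1)" for N
    by (rule sigma_hat2_residual[OF centered y r_X r_1])
  then have "r \<noteq> 0" "real CARD('n) - real CARD('p) - 1 > 0"
    using resid_pos by (auto simp: zero_less_divide_iff)
  moreover have "filterlim (\<lambda>N. norm (\<beta> N)) at_top sequentially"
    by (rule filterlim_at_top_mono[OF block1_diverges always_eventually])
      (auto intro: norm_le_componentwise_cart)
  ultimately show ?thesis
    using weak_conv_sigma2_posterior[OF inj centered a_gt y r_X r_1 _ n_large
        filterlim_norm_matrix_vector_mult_at_top[OF inj]]
    by (simp add: sigma_hat2)
qed

end
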